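(* Let $G$ be a non-discrete compact group with normalized Haar measure $\nu$. For every neighborhood $U$ of the identity there exists a finite set $H\subseteq G$ such that (1) $HU=G$, and (2) for every $I\subseteq H$, $\nu(IU)\ge \frac{|I|}{|H|}$. *)

theory Defs
  imports "HOL-Probability.Probability"
begin

text \<open>A compact group is modelled as a type of class topological_group_add
(group operation written additively, NOT assumed commutative) which is
Hausdorff and compact. The identity is 0.\<close>

definition discrete_top :: "'a::topological_space itself \<Rightarrow> bool" where
  "discrete_top _ \<longleftrightarrow> (\<forall>S::'a set. open S)"

definition normalized_haar :: "'a::topological_group_add measure \<Rightarrow> bool" where
  "normalized_haar \<nu> \<longleftrightarrow>
     prob_space \<nu> \<and> sets \<nu> = sets borel \<and>
     (\<forall>g. \<forall>A \<in> sets borel. emeasure \<nu> ((\<lambda>x. g + x) ` A) = emeasure \<nu> A) \<and>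
     (\<forall>B \<in> sets borel. emeasure \<nu> B = (INF V \<in> {V. B \<subseteq> V \<and> open V}. emeasure \<nu> V)) \<and>
     (\<forall>V. open V \<longrightarrow> emeasure \<nu> V = (SUP K \<in> {K. K \<subseteq> V \<and> compact K}. emeasure \<nu> K))"

end

(*
  Pick a symmetric open neighbourhood W of 0 with W + W + W + W + W <= U and cover the
  group by finitely many cells x + W, x in X.  The normalised indicators of the cells form
  a partition of unity whose integrals are at least 1 / |X|^2 but otherwise arbitrary.
  Call two cells near if their centres differ by an element of W + W + W; inside each coset
  of the open subgroup generated by W the near graph is connected, so it has a spanning
  tree.  Pushing from every node to its parent the amount by which the mass of its subtree
  exceeds the grid (1/N)Z, with N = [G : <W>] * |X|^2, leaves every node with a function
  of integral k_x / N, k_x >= 1; nothing has to leave a root because a coset has measure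
  1 / [G : <W>].  Splitting the function of x evenly among k_x distinct points of its
  (infinite) cell yields a partition of unity (w_h), h in H, with w_h supported in h + U and
  all integrals equal to 1 / |H|.  Hence the h + U cover G and
  nu (I + U) >= integral (sum of w_h over h in I) = |I| / |H|.
*)

theory Submission
  imports Defs
begin

section \<open>Neighbourhoods and open sets in topological groups\<close>

lemma open_image_add_left:
  fixes S :: "'a::topological_group_add set"
  assumes "open S"
  shows "open ((+) a ` S)"
proof -
  have "(+) a ` S = (\<lambda>x. -a + x) -` S"
    by (auto intro: image_eqI[where x = "-a + _"] simp: add.assoc[symmetric])
  moreover have "continuous_on UNIV (\<lambda>x::'a. -a + x)"
    by (intro continuous_intros)
  ultimately show ?thesis
    using assms by (simp add: open_vimage)
qed

lemma nhds_zero_add_split: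
  fixes U :: "'a::topological_group_add set"
  assumes "open U" "0 \<in> U"
  obtains V where "open V" "0 \<in> V" "\<And>a b. a \<in> V \<Longrightarrow> b \<in> V \<Longrightarrow> a + b \<in> U"
proof -
  have "((\<lambda>x. fst x + snd x) \<longlongrightarrow> (0::'a) + 0) (nhds 0 \<times>\<^sub>F nhds 0)"
    by (rule tendsto_add_Pair)
  then have "eventually (\<lambda>x. fst x + snd x \<in> U) (nhds (0::'a) \<times>\<^sub>F nhds 0)"
    using assms by (simp add: tendsto_def)
  then obtain Q where Q: "eventually Q (nhds (0::'a))" "\<And>x y. Q x \<Longrightarrow> Q y \<Longrightarrow> x + y \<in> U"
    unfolding eventually_prod_same by auto
  from Q(1) obtain V where "open V" "0 \<in> V" "\<forall>x\<in>V. Q x"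
    unfolding eventually_nhds by blast
  with Q(2) show thesis
    by (intro that) auto
qed

lemma symmetric_nhds_zero_sum5:
  fixes U :: "'a::topological_group_add set"
  assumes "open U" "0 \<in> U"
  obtains W where "open W" "0 \<in> W" "\<And>w. w \<in> W \<Longrightarrow> -w \<in> W"
    "\<And>a b c d e. a \<in> W \<Longrightarrow> b \<in> W \<Longrightarrow> c \<in> W \<Longrightarrow> d \<in> W \<Longrightarrow> e \<in> W \<Longrightarrow>
       a + (b + (c + (d + e))) \<in> U"
proof -
  obtain V1 where V1: "open V1" "0 \<in> V1" "\<And>a b. a \<in> V1 \<Longrightarrow> b \<in> V1 \<Longrightarrow> a + b \<in> U"
    using nhds_zero_add_split[OF assms] by blast
  obtain V2 where V2: "open V2" "0 \<in> V2" "\<And>a b. a \<in> V2 \<Longrightarrow> b \<in> V2 \<Longrightarrow> a + b \<in> V1"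
    using nhds_zero_add_split[OF V1(1,2)] by blast
  obtain V3 where V3: "open V3" "0 \<in> V3" "\<And>a b. a \<in> V3 \<Longrightarrow> b \<in> V3 \<Longrightarrow> a + b \<in> V2"
    using nhds_zero_add_split[OF V2(1,2)] by blast
  have "open (uminus -` V3 :: 'a set)"
    using V3(1) by (intro open_vimage continuous_intros) auto
  then have "open (V3 \<inter> uminus -` V3)"
    using V3(1) by blast
  moreover have "(a + b + (c + d)) + (e + 0 + (0 + 0)) \<in> U"
    if "a \<in> V3" "b \<in> V3" "c \<in> V3" "d \<in> V3" "e \<in> V3" for a b c d e
    using that V3(2) by (intro V1(3) V2(3) V3(3))
  ultimately show thesis
    using V3(2) by (intro that[of "V3 \<inter> uminus -` V3"]) (auto simp: add.assoc)
qed

lemma infinite_open_if_not_discrete: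
  fixes A :: "'a::{topological_group_add, t1_space} set"
  assumes "\<not> discrete_top TYPE('a)" "open A" "a \<in> A"
  shows "infinite A"
proof
  assume "finite A"
  then have "open (A - (A - {a}))"
    using assms(2) by (intro open_Diff finite_imp_closed) auto
  moreover have "A - (A - {a}) = {a}"
    using assms(3) by auto
  ultimately have "open {g - a + a}" for g
    using open_image_add_left[of "{a}" "g - a"] by simp
  then have "open S" for S :: "'a set"
    using open_UN[of S "\<lambda>g. {g}"] by simp
  with assms(1) show False
    unfolding discrete_top_def by blast
qed

lemma exists_finite_copies:
  assumes "finite X" "\<And>x. x \<in> X \<Longrightarrow> infinite (A x)"
  shows "\<exists>H own. finite H \<and> (\<forall>h\<in>H. own h \<in> X \<and> h \<in> A (own h)) \<and>
    (\<forall>x\<in>X. card {h \<in> H. own h = x} = k x)"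
  using assms
proof (induction X rule: finite_induct)
  case (insert a X)
  then obtain H own where H: "finite H" "\<forall>h\<in>H. own h \<in> X \<and> h \<in> A (own h)"
    "\<forall>x\<in>X. card {h \<in> H. own h = x} = k x"
    by blast
  have "infinite (A a - H)"
    using insert.prems H(1) by (simp add: Diff_infinite_finite)
  then obtain D where D: "finite D" "card D = k a" "D \<subseteq> A a - H"
    using infinite_arbitrarily_large by blast
  define own' where "own' h = (if h \<in> D then a else own h)" for h
  have "{h \<in> H \<union> D. own' h = a} = D"
    using H(2) insert.hyps(2) unfolding own'_def by auto
  moreover have "{h \<in> H \<union> D. own' h = x} = {h \<in> H. own h = x}" if "x \<in> X" for x
    using that D(3) insert.hyps(2) unfolding own'_def by auto
  ultimately have "\<forall>x\<in>insert a X. card {h \<in> H \<union> D. own' h = x} = k x"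
    using H(3) D(2) by auto
  moreover have "\<forall>h\<in>H \<union> D. own' h \<in> insert a X \<and> h \<in> A (own' h)"
    using H(2) D(3) unfolding own'_def by auto
  ultimately show ?case
    using H(1) D(1) by blast
qed simp

lemma finite_translates_cover:
  fixes W :: "'a::topological_group_add set"
  assumes "compact (UNIV :: 'a set)" "open W" "0 \<in> W"
  obtains X where "finite X" "(\<Union>x\<in>X. (+) x ` W) = UNIV"
proof -
  have "x \<in> (+) x ` W" for x
    using assms(3) by (rule image_eqI[where x = 0, rotated]) simp
  then have "UNIV \<subseteq> (\<Union>x. (+) x ` W)"
    by blast
  then obtain X where "X \<subseteq> UNIV" "finite X" "UNIV \<subseteq> (\<Union>x\<in>X. (+) x ` W)"
    by (rule compactE_image[OF assms(1) open_image_add_left[OF assms(2)]])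
  then show thesis
    using that by blast
qed

section \<open>The subgroup generated by a symmetric set\<close>

inductive_set add_closure :: "'a::monoid_add set \<Rightarrow> 'a set" for W :: "'a set" where
  zero: "0 \<in> add_closure W"
| add_right: "s \<in> add_closure W \<Longrightarrow> w \<in> W \<Longrightarrow> s + w \<in> add_closure W"

lemma subset_add_closure: "W \<subseteq> add_closure W"
  using add_closure.add_right[OF add_closure.zero] by fastforce

lemma add_closure_minimal:
  fixes W :: "'a::monoid_add set"
  assumes "s \<in> add_closure W" "r \<in> A" "\<And>a w. a \<in> A \<Longrightarrow> w \<in> W \<Longrightarrow> a + w \<in> A"
  shows "r + s \<in> A"
  using assms(1) by induction (use assms(2,3) in \<open>auto simp: add.assoc[symmetric]\<close>)

lemma add_closure_add:
  "s \<in> add_closure W \<Longrightarrow> t \<in> add_closure W \<Longrightarrow> s + t \<in> add_closure W"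
  by (rule add_closure_minimal) (auto intro: add_closure.add_right)

lemma add_closure_uminus:
  fixes W :: "'a::group_add set"
  assumes "\<And>w. w \<in> W \<Longrightarrow> -w \<in> W" "s \<in> add_closure W"
  shows "-s \<in> add_closure W"
  using assms(2)
proof induction
  case (add_right s w)
  have "-w \<in> add_closure W"
    using assms(1) add_right(2) subset_add_closure by blast
  then show ?case
    using add_closure_add[OF _ add_right(3)] by (simp add: minus_add)
qed (simp add: add_closure.zero)

lemma open_add_closure:
  fixes W :: "'a::topological_group_add set"
  assumes "open W" "0 \<in> W"
  shows "open (add_closure W)"
proof -
  have "add_closure W = (\<Union>s\<in>add_closure W. (+) s ` W)"
    using assms(2) by (force intro: add_closure.add_right)
  then show ?thesis
    using open_image_add_left[OF assms(1)] by (metis open_UN)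
qed

lemma mem_coset_add_closure:
  fixes W :: "'a::group_add set"
  shows "y \<in> (+) x ` add_closure W \<longleftrightarrow> -x + y \<in> add_closure W"
  by (auto simp: add.assoc[symmetric] intro: image_eqI[where x = "-x + y"])

lemma coset_add_closure_eq_iff:
  fixes W :: "'a::group_add set"
  assumes "\<And>w. w \<in> W \<Longrightarrow> -w \<in> W"
  shows "(+) x ` add_closure W = (+) y ` add_closure W \<longleftrightarrow> -x + y \<in> add_closure W"
proof
  assume "(+) x ` add_closure W = (+) y ` add_closure W"
  then show "-x + y \<in> add_closure W"
    using mem_coset_add_closure[of y y W] mem_coset_add_closure[of y x W] add_closure.zero
    by auto
next
  assume xy: "-x + y \<in> add_closure W"
  then have yx: "-y + x \<in> add_closure W"
    using add_closure_uminus[OF assms] by (metis minus_add minus_minus)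
  have "-x + z = (-x + y) + (-y + z)" "-y + z = (-y + x) + (-x + z)" for z
    by (simp_all add: add.assoc[symmetric])
  then show "(+) x ` add_closure W = (+) y ` add_closure W"
    using xy yx unfolding set_eq_iff mem_coset_add_closure by (metis add_closure_add)
qed

section \<open>Partitions of unity\<close>

definition indicator_partition :: "('b \<Rightarrow> 'a set) \<Rightarrow> 'b set \<Rightarrow> 'b \<Rightarrow> 'a \<Rightarrow> real" where
  "indicator_partition A X y g = indicator (A y) g / (\<Sum>x\<in>X. indicator (A x) g)"

lemma indicator_partition_nonneg: "0 \<le> indicator_partition A X y g"
  unfolding indicator_partition_def by (simp add: sum_nonneg)

lemma indicator_partition_eq_0: "g \<notin> A y \<Longrightarrow> indicator_partition A X y g = 0"
  unfolding indicator_partition_def by simp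

lemma indicator_le_sum_indicator:
  "finite X \<Longrightarrow> y \<in> X \<Longrightarrow> indicator (A y) g \<le> (\<Sum>x\<in>X. indicator (A x) g :: real)"
  by (rule member_le_sum) auto

lemma indicator_partition_le_1:
  assumes "finite X" "y \<in> X"
  shows "indicator_partition A X y g \<le> 1"
  using indicator_le_sum_indicator[OF assms, of A g]
  unfolding indicator_partition_def by (auto simp: indicator_def)

lemma sum_indicator_partition:
  assumes "finite X" "g \<in> (\<Union>x\<in>X. A x)"
  shows "(\<Sum>y\<in>X. indicator_partition A X y g) = 1"
proof -
  obtain y where "y \<in> X" "g \<in> A y"
    using assms(2) by blast
  then have "(\<Sum>x\<in>X. indicator (A x) g :: real) \<noteq> 0"
    using indicator_le_sum_indicator[OF assms(1), of y A g] by auto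
  then show ?thesis
    unfolding indicator_partition_def by (simp add: sum_divide_distrib[symmetric])
qed

lemma sum_indicator_partition_eq_indicator:
  assumes "finite X" "g \<in> (\<Union>x\<in>X. A x)" "Y \<subseteq> X"
    and "\<And>y. y \<in> Y \<Longrightarrow> A y \<subseteq> B" "\<And>y. y \<in> X - Y \<Longrightarrow> A y \<inter> B = {}"
  shows "(\<Sum>y\<in>Y. indicator_partition A X y g) = indicator B g"
proof (cases "g \<in> B")
  case True
  then have "(\<Sum>y\<in>Y. indicator_partition A X y g) = (\<Sum>y\<in>X. indicator_partition A X y g)"
    using assms(5) by (intro sum.mono_neutral_left assms(1,3)) (auto intro: indicator_partition_eq_0)
  with True show ?thesis
    using sum_indicator_partition[OF assms(1,2)] by simp
next
  case False
  then show ?thesis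
    using assms(4) by (auto intro!: sum.neutral indicator_partition_eq_0)
qed

lemma integrable_indicator_partition:
  assumes "finite_measure M" "finite X" "y \<in> X" "\<And>x. x \<in> X \<Longrightarrow> A x \<in> sets M"
  shows "integrable M (indicator_partition A X y)"
proof (rule finite_measure.integrable_const_bound[OF assms(1), where B = 1])
  show "indicator_partition A X y \<in> borel_measurable M"
    unfolding indicator_partition_def using assms(3,4)
    by (auto intro!: borel_measurable_divide borel_measurable_sum borel_measurable_indicator)
  show "AE g in M. norm (indicator_partition A X y g) \<le> 1"
    by (intro AE_I2)
      (simp add: abs_of_nonneg indicator_partition_nonneg indicator_partition_le_1[OF assms(2,3)])
qed

lemma integral_indicator_partition_ge:
  assumes "finite_measure M" "finite X" "y \<in> X" "\<And>x. x \<in> X \<Longrightarrow> A x \<in> sets M"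
  shows "measure M (A y) / card X \<le> integral\<^sup>L M (indicator_partition A X y)"
proof -
  have "(\<Sum>x\<in>X. indicator (A x) g :: real) \<le> card X" for g
    using sum_mono[of X "\<lambda>x. indicator (A x) g" "\<lambda>_. 1 :: real"] by (simp add: indicator_def)
  then have "indicator (A y) g / card X \<le> indicator_partition A X y g" for g
    using indicator_le_sum_indicator[OF assms(2,3), of A g]
    unfolding indicator_partition_def by (auto simp: indicator_def intro: frac_le)
  then have "integral\<^sup>L M (\<lambda>g. indicator (A y) g / card X) \<le> integral\<^sup>L M (indicator_partition A X y)"
    using assms by (intro integral_mono integrable_indicator_partition integrable_divide
        integrable_real_indicator)
      (auto simp: finite_measure.emeasure_finite less_top[symmetric])
  then show ?thesis
    using assms(3,4) by simp
qed

definition partition_of_unity_subordinate ::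
    "'a measure \<Rightarrow> 'b set \<Rightarrow> ('b \<Rightarrow> 'a \<Rightarrow> real) \<Rightarrow> ('b \<Rightarrow> 'a set) \<Rightarrow> bool" where
  "partition_of_unity_subordinate M H w V \<longleftrightarrow> finite H \<and>
     (\<forall>h\<in>H. integrable M (w h) \<and> (\<forall>g. 0 \<le> w h g \<and> (w h g \<noteq> 0 \<longrightarrow> g \<in> V h))) \<and>
     (\<forall>g\<in>space M. (\<Sum>h\<in>H. w h g) = 1)"

lemma partition_of_unity_subordinate_cover:
  assumes "partition_of_unity_subordinate M H w V"
  shows "space M \<subseteq> (\<Union>h\<in>H. V h)"
proof
  fix g assume "g \<in> space M"
  then have "(\<Sum>h\<in>H. w h g) \<noteq> 0"
    using assms unfolding partition_of_unity_subordinate_def by simp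
  then obtain h where "h \<in> H" "w h g \<noteq> 0"
    by (meson sum.neutral)
  then show "g \<in> (\<Union>h\<in>H. V h)"
    using assms unfolding partition_of_unity_subordinate_def by blast
qed

lemma partition_of_unity_subordinate_sum_le_indicator:
  assumes "partition_of_unity_subordinate M H w V" "I \<subseteq> H" "g \<in> space M"
  shows "(\<Sum>h\<in>I. w h g) \<le> indicator (\<Union>h\<in>I. V h) g"
proof -
  have "finite H" and nonneg: "\<And>h. h \<in> H \<Longrightarrow> 0 \<le> w h g"
    and supp: "\<And>h. h \<in> H \<Longrightarrow> w h g \<noteq> 0 \<Longrightarrow> g \<in> V h" and "(\<Sum>h\<in>H. w h g) = 1"
    using assms(1,3) unfolding partition_of_unity_subordinate_def by auto
  show ?thesis
  proof (cases "g \<in> (\<Union>h\<in>I. V h)")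
    case True
    then show ?thesis
      using sum_mono2[OF \<open>finite H\<close> assms(2), of "\<lambda>h. w h g"] nonneg \<open>(\<Sum>h\<in>H. w h g) = 1\<close>
      by simp
  next
    case False
    then have "(\<Sum>h\<in>I. w h g) = 0"
      using supp assms(2) by (intro sum.neutral) blast
    with False show ?thesis
      by simp
  qed
qed

lemma partition_of_unity_subordinate_measure_ge:
  assumes "prob_space M" "partition_of_unity_subordinate M H w V"
    and "\<And>h. h \<in> H \<Longrightarrow> V h \<in> sets M" "\<And>h. h \<in> H \<Longrightarrow> integral\<^sup>L M (w h) = a"
    and "I \<subseteq> H"
  shows "card I / card H \<le> measure M (\<Union>h\<in>I. V h)"
proof -
  interpret prob_space M by fact
  have fin: "finite H" and int: "\<And>h. h \<in> H \<Longrightarrow> integrable M (w h)"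
    and sum1: "\<And>g. g \<in> space M \<Longrightarrow> (\<Sum>h\<in>H. w h g) = 1"
    using assms(2) unfolding partition_of_unity_subordinate_def by auto
  have integral_sum: "integral\<^sup>L M (\<lambda>g. \<Sum>h\<in>J. w h g) = card J * a" if "J \<subseteq> H" for J
    using that assms(4) int by (simp add: Bochner_Integration.integral_sum subset_iff)
  have "1 = card H * a"
    using integral_sum[of H] sum1 prob_space by (simp cong: Bochner_Integration.integral_cong)
  then have "a = 1 / card H"
    by (auto simp: eq_divide_eq mult.commute)
  then have "card I / card H = integral\<^sup>L M (\<lambda>g. \<Sum>h\<in>I. w h g)"
    using integral_sum[OF assms(5)] by simp
  also have "\<dots> \<le> integral\<^sup>L M (indicator (\<Union>h\<in>I. V h))"
  proof (rule integral_mono_AE)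
    show "integrable M (\<lambda>g. \<Sum>h\<in>I. w h g)"
      using int assms(5) by (auto intro: Bochner_Integration.integrable_sum)
    show "integrable M (indicator (\<Union>h\<in>I. V h) :: 'a \<Rightarrow> real)"
      using assms(3,5) fin
      by (intro integrable_real_indicator) (auto intro: finite_subset simp: less_top[symmetric])
    show "AE g in M. (\<Sum>h\<in>I. w h g) \<le> indicator (\<Union>h\<in>I. V h) g"
      using partition_of_unity_subordinate_sum_le_indicator[OF assms(2,5)] by simp
  qed
  also have "\<dots> = measure M (\<Union>h\<in>I. V h)"
    using assms(3,5) fin by (subst sets.Int_space_eq2[symmetric]) (auto intro: finite_subset)
  finally show ?thesis .
qed

section \<open>Rounding weights along a rooted forest\<close>

text \<open>Roots are the nodes of depth \<open>0\<close>; \<open>par\<close> matters only at nodes of positive depth.\<close>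

locale rooted_forest =
  fixes X :: "'b set" and par :: "'b \<Rightarrow> 'b" and dep :: "'b \<Rightarrow> nat"
  assumes finite_nodes: "finite X"
    and par_in_nodes: "x \<in> X \<Longrightarrow> par x \<in> X"
    and dep_par: "x \<in> X \<Longrightarrow> 0 < dep x \<Longrightarrow> Suc (dep (par x)) = dep x"
begin

definition children :: "'b \<Rightarrow> 'b set" where
  "children x = {z \<in> X. 0 < dep z \<and> par z = x}"

definition subtree :: "'b \<Rightarrow> 'b set" where
  "subtree x = {y \<in> X. dep x \<le> dep y \<and> (par ^^ (dep y - dep x)) y = x}"

lemma funpow_par_in_nodes:
  assumes "y \<in> X" "k \<le> dep y"
  shows "(par ^^ k) y \<in> X \<and> dep ((par ^^ k) y) = dep y - k"
  using assms(2)
proof (induction k)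
  case (Suc k)
  then have "(par ^^ k) y \<in> X" "dep ((par ^^ k) y) = dep y - k"
    by auto
  with Suc.prems show ?case
    using dep_par[of "(par ^^ k) y"] par_in_nodes by auto
qed (simp add: assms(1))

lemma dep_child: "z \<in> children x \<Longrightarrow> dep z = Suc (dep x)"
  unfolding children_def using dep_par by force

lemma children_subset: "children x \<subseteq> X"
  unfolding children_def by blast

lemma finite_children: "finite (children x)"
  unfolding children_def using finite_nodes by simp

lemma finite_subtree: "finite (subtree x)"
  unfolding subtree_def using finite_nodes by simp

lemma subtree_child_subset:
  assumes "z \<in> children x"
  shows "subtree z \<subseteq> subtree x"
proof
  fix y assume "y \<in> subtree z"
  then have y: "y \<in> X" "dep z \<le> dep y" "(par ^^ (dep y - dep z)) y = z"
    unfolding subtree_def by auto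
  have dep_z: "dep z = Suc (dep x)" and "par z = x"
    using dep_child[OF assms] assms unfolding children_def by simp_all
  have "dep y - dep x = Suc (dep y - dep z)"
    using y(2) dep_z by linarith
  then have "(par ^^ (dep y - dep x)) y = par ((par ^^ (dep y - dep z)) y)"
    by simp
  also have "\<dots> = x"
    using y(3) \<open>par z = x\<close> by simp
  finally show "y \<in> subtree x"
    using y dep_z unfolding subtree_def by simp
qed

lemma mem_subtree_child:
  assumes "y \<in> subtree x" "y \<noteq> x"
  obtains z where "z \<in> children x" "y \<in> subtree z"
proof -
  have yX: "y \<in> X" and less: "dep x < dep y" and anc: "(par ^^ (dep y - dep x)) y = x"
    using assms unfolding subtree_def by (auto simp: le_less)
  define z where "z = (par ^^ (dep y - Suc (dep x))) y"
  have "z \<in> X" and dep_z: "dep z = Suc (dep x)"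
    using funpow_par_in_nodes[OF yX, of "dep y - Suc (dep x)"] less unfolding z_def by auto
  moreover have "par z = (par ^^ Suc (dep y - Suc (dep x))) y"
    unfolding z_def by simp
  with less anc have "par z = x"
    by (simp add: Suc_diff_Suc)
  ultimately have "z \<in> children x"
    unfolding children_def by simp
  moreover have "(par ^^ (dep y - dep z)) y = z"
    unfolding dep_z by (simp add: z_def)
  then have "y \<in> subtree z"
    unfolding subtree_def using yX less dep_z by simp
  ultimately show thesis
    by (rule that)
qed

lemma subtree_unfold:
  assumes "x \<in> X"
  shows "subtree x = insert x (\<Union>z\<in>children x. subtree z)"
proof (intro equalityI subsetI)
  fix y assume "y \<in> subtree x"
  then show "y \<in> insert x (\<Union>z\<in>children x. subtree z)"
    by (cases "y = x") (blast elim: mem_subtree_child)+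
next
  have "x \<in> subtree x"
    using assms unfolding subtree_def by simp
  then show "y \<in> subtree x" if "y \<in> insert x (\<Union>z\<in>children x. subtree z)" for y
    using that subtree_child_subset by blast
qed

lemma disjoint_family_on_subtree_children: "disjoint_family_on subtree (children x)"
  unfolding disjoint_family_on_def
proof (intro ballI impI)
  fix z z' assume "z \<in> children x" "z' \<in> children x" "z \<noteq> z'"
  moreover have "(par ^^ (dep y - dep z)) y = z" "(par ^^ (dep y - dep z')) y = z'"
    if "y \<in> subtree z" "y \<in> subtree z'" for y
    using that unfolding subtree_def by auto
  ultimately show "subtree z \<inter> subtree z' = {}"
    using dep_child by (metis disjoint_iff)
qed

lemma sum_subtree_unfold:
  assumes "x \<in> X"
  shows "(\<Sum>y\<in>subtree x. f y) = f x + (\<Sum>z\<in>children x. \<Sum>y\<in>subtree z. f y)"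
proof -
  have "x \<notin> subtree z" if "z \<in> children x" for z
    using dep_child[OF that] unfolding subtree_def by simp
  then have "(\<Sum>y\<in>subtree x. f y) = f x + (\<Sum>y\<in>(\<Union>z\<in>children x. subtree z). f y)"
    unfolding subtree_unfold[OF assms] by (simp add: finite_children finite_subtree)
  also have "(\<Sum>y\<in>(\<Union>z\<in>children x. subtree z). f y) = (\<Sum>z\<in>children x. \<Sum>y\<in>subtree z. f y)"
    by (intro sum.UNION_disjoint_family)
      (simp_all add: finite_children finite_subtree disjoint_family_on_subtree_children)
  finally show ?thesis .
qed

lemma subtree_of_root: "dep r = 0 \<Longrightarrow> subtree r = {y \<in> X. (par ^^ dep y) y = r}"
  unfolding subtree_def by simp

lemma funpow_dep_eq:
  assumes "\<And>x. x \<in> X \<Longrightarrow> 0 < dep x \<Longrightarrow> f (par x) = f x"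
    and "\<And>x. x \<in> X \<Longrightarrow> dep x = 0 \<Longrightarrow> f x = x"
    and "y \<in> X"
  shows "(par ^^ dep y) y = f y"
  using assms(3)
proof (induction "dep y" arbitrary: y)
  case (Suc n)
  then have "dep (par y) = n"
    using dep_par[of y] by simp
  then have "(par ^^ n) (par y) = f (par y)"
    using Suc.hyps(1)[of "par y"] par_in_nodes[OF Suc.prems] by simp
  also have "(par ^^ n) (par y) = (par ^^ dep y) y"
    unfolding Suc.hyps(2)[symmetric] by (simp add: funpow_Suc_right del: funpow.simps)
  finally show ?case
    using assms(1) Suc by simp
qed (simp add: assms(2))

end

lemma exists_shortest_path_parent:
  assumes "\<And>x. x \<in> X \<Longrightarrow> (\<rho> x, x) \<in> R\<^sup>*"
  obtains dep par where "\<And>x. x \<in> X \<Longrightarrow> (\<rho> x, x) \<in> R ^^ dep x"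
    "\<And>x k. (\<rho> x, x) \<in> R ^^ k \<Longrightarrow> dep x \<le> k"
    "\<And>x. x \<in> X \<Longrightarrow> 0 < dep x \<Longrightarrow> (\<rho> x, par x) \<in> R ^^ (dep x - 1) \<and> (par x, x) \<in> R"
    "\<And>x. dep x = 0 \<Longrightarrow> par x = x"
proof -
  define dep where "dep x = (LEAST k. (\<rho> x, x) \<in> R ^^ k)" for x
  define par where
    "par x = (if dep x = 0 then x else SOME y. (\<rho> x, y) \<in> R ^^ (dep x - 1) \<and> (y, x) \<in> R)" for x
  have dep_path: "(\<rho> x, x) \<in> R ^^ dep x" if x: "x \<in> X" for x
  proof -
    obtain k where "(\<rho> x, x) \<in> R ^^ k"
      using assms[OF x] rtrancl_power by blast
    then show ?thesis
      unfolding dep_def by (rule LeastI)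
  qed
  moreover have "dep x \<le> k" if "(\<rho> x, x) \<in> R ^^ k" for x k
    unfolding dep_def using that by (rule Least_le)
  moreover have "(\<rho> x, par x) \<in> R ^^ (dep x - 1) \<and> (par x, x) \<in> R" if "x \<in> X" "0 < dep x" for x
  proof -
    have "(\<rho> x, x) \<in> R ^^ Suc (dep x - 1)"
      using dep_path[OF that(1)] that(2) by simp
    then have "\<exists>y. (\<rho> x, y) \<in> R ^^ (dep x - 1) \<and> (y, x) \<in> R"
      by (meson relpow_Suc_E)
    then have "(\<rho> x, SOME y. (\<rho> x, y) \<in> R ^^ (dep x - 1) \<and> (y, x) \<in> R) \<in> R ^^ (dep x - 1) \<and>
        (SOME y. (\<rho> x, y) \<in> R ^^ (dep x - 1) \<and> (y, x) \<in> R, x) \<in> R"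
      by (rule someI_ex)
    then show ?thesis
      unfolding par_def using that(2) by simp
  qed
  moreover have "par x = x" if "dep x = 0" for x
    unfolding par_def using that by simp
  ultimately show thesis
    by (rule that)
qed

lemma exists_rooted_forest:
  assumes "finite X" "R \<subseteq> X \<times> X" "\<And>a b. (a, b) \<in> R \<Longrightarrow> \<rho> a = \<rho> b"
    and "\<And>x. x \<in> X \<Longrightarrow> (\<rho> x, x) \<in> R\<^sup>*"
  obtains par dep where "rooted_forest X par dep"
    "\<And>x. x \<in> X \<Longrightarrow> 0 < dep x \<Longrightarrow> (par x, x) \<in> R"
    "\<And>x. x \<in> X \<Longrightarrow> (par ^^ dep x) x = \<rho> x"
proof -
  obtain dep par where dep_path: "\<And>x. x \<in> X \<Longrightarrow> (\<rho> x, x) \<in> R ^^ dep x"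
    and dep_le: "\<And>x k. (\<rho> x, x) \<in> R ^^ k \<Longrightarrow> dep x \<le> k"
    and par: "\<And>x. x \<in> X \<Longrightarrow> 0 < dep x \<Longrightarrow> (\<rho> x, par x) \<in> R ^^ (dep x - 1) \<and> (par x, x) \<in> R"
    and par_root: "\<And>x. dep x = 0 \<Longrightarrow> par x = x"
    using exists_shortest_path_parent[OF assms(4)] by blast
  have par_in: "par x \<in> X" if "x \<in> X" for x
    using par[OF that] assms(2) that par_root by (cases "dep x = 0") auto
  have \<rho>_par: "\<rho> (par x) = \<rho> x" if "x \<in> X" "0 < dep x" for x
    using par[OF that] assms(3) by blast
  have dep_par: "Suc (dep (par x)) = dep x" if "x \<in> X" "0 < dep x" for x
  proof -
    have "dep (par x) \<le> dep x - 1"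
      using dep_le[of "par x" "dep x - 1"] par[OF that] \<rho>_par[OF that] by simp
    moreover have "(\<rho> x, par x) \<in> R ^^ dep (par x)"
      using dep_path[OF par_in[OF that(1)]] \<rho>_par[OF that] by simp
    then have "(\<rho> x, x) \<in> R ^^ Suc (dep (par x))"
      using par[OF that] by (intro relpow_Suc_I) auto
    ultimately show ?thesis
      using dep_le[of x "Suc (dep (par x))"] that(2) by simp
  qed
  interpret rooted_forest X par dep
    using assms(1) par_in dep_par by unfold_locales
  have "\<rho> x = x" if "x \<in> X" "dep x = 0" for x
    using dep_path[OF that(1)] that(2) by simp
  with \<rho>_par have "(par ^^ dep x) x = \<rho> x" if "x \<in> X" for x
    using funpow_dep_eq[OF _ _ that] by blast
  with par show thesis
    using that rooted_forest_axioms by blast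
qed

locale forest_rounding = rooted_forest X par dep for X :: "'b set" and par dep +
  fixes c :: "'b \<Rightarrow> real" and N :: nat
  assumes N_pos: "0 < N"
    and weight_ge_inverse_N: "x \<in> X \<Longrightarrow> 1 / real N \<le> c x"
    and root_mass_in_grid: "r \<in> X \<Longrightarrow> dep r = 0 \<Longrightarrow> (\<Sum>y\<in>subtree r. c y) * real N \<in> \<int>"
begin

definition mass :: "'b \<Rightarrow> real" where
  "mass x = (\<Sum>y\<in>subtree x. c y)"

definition grid :: "'b \<Rightarrow> int" where
  "grid x = \<lfloor>mass x * real N\<rfloor>"

definition excess :: "'b \<Rightarrow> real" where
  "excess x = mass x - grid x / real N"

definition copies :: "'b \<Rightarrow> nat" where
  "copies x = nat (grid x - (\<Sum>z\<in>children x. grid z))"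

text \<open>\<open>transport x y\<close> is the fraction of the weight of \<open>y\<close> handed to \<open>x\<close>: every node passes
  the \<open>excess\<close> of its subtree, the part of its mass above the grid \<open>(1 / N) \<int>\<close>, to its
  parent and keeps the rest.\<close>

definition transport :: "'b \<Rightarrow> 'b \<Rightarrow> real" where
  "transport x y =
     (if y = x then 1 - excess x / c x else if y \<in> children x then excess y / c y else 0)"

lemma mass_unfold: "x \<in> X \<Longrightarrow> mass x = c x + (\<Sum>z\<in>children x. mass z)"
  unfolding mass_def by (rule sum_subtree_unfold)

lemma excess_nonneg: "0 \<le> excess x"
  using N_pos of_int_floor_le[of "mass x * N"]
  unfolding excess_def grid_def by (simp add: field_simps)

lemma excess_less: "excess x < 1 / real N"
proof -
  have "(mass x * N - grid x) / N < 1 / N"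
    using N_pos real_of_int_floor_add_one_gt[of "mass x * N"]
    unfolding grid_def by (intro divide_strict_right_mono) linarith+
  then show ?thesis
    using N_pos by (simp add: excess_def diff_divide_distrib)
qed

lemma excess_root:
  assumes "r \<in> X" "dep r = 0"
  shows "excess r = 0"
proof -
  obtain m where "mass r * N = of_int m"
    using root_mass_in_grid[OF assms] unfolding mass_def by (auto elim: Ints_cases)
  then show ?thesis
    using N_pos unfolding excess_def grid_def by (simp add: field_simps)
qed

lemma weight_pos: "x \<in> X \<Longrightarrow> 0 < c x"
  using weight_ge_inverse_N[of x] N_pos by (auto intro: less_le_trans[of 0 "1 / real N"])

lemma excess_le_weight: "x \<in> X \<Longrightarrow> excess x \<le> c x"
  using excess_less[of x] weight_ge_inverse_N[of x] by linarith

lemma sum_grid_children_less: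
  assumes "x \<in> X"
  shows "(\<Sum>z\<in>children x. grid z) < grid x"
proof -
  have "(\<Sum>z\<in>children x. real_of_int (grid z)) \<le> (\<Sum>z\<in>children x. mass z * N)"
    unfolding grid_def by (intro sum_mono) simp
  also have "\<dots> = (mass x - c x) * N"
    using mass_unfold[OF assms] by (simp add: sum_distrib_right)
  also have "\<dots> \<le> mass x * N - 1"
    using weight_ge_inverse_N[OF assms] N_pos by (simp add: field_simps)
  also have "\<dots> < grid x"
    unfolding grid_def by linarith
  finally show ?thesis
    by (simp only: of_int_sum[symmetric] of_int_less_iff)
qed

lemma copies_pos: "x \<in> X \<Longrightarrow> 0 < copies x"
  using sum_grid_children_less unfolding copies_def by simp

lemma of_nat_copies: "x \<in> X \<Longrightarrow> real (copies x) = grid x - (\<Sum>z\<in>children x. grid z)"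
  using sum_grid_children_less[of x] unfolding copies_def by simp

lemma transport_nonneg: "x \<in> X \<Longrightarrow> y \<in> X \<Longrightarrow> 0 \<le> transport x y"
  using excess_nonneg excess_le_weight weight_pos
  unfolding transport_def by (simp add: field_simps)

lemma transport_neq_0: "transport x y \<noteq> 0 \<Longrightarrow> y = x \<or> (0 < dep y \<and> par y = x)"
  unfolding transport_def children_def by (auto split: if_splits)

lemma sum_transport_column:
  assumes "y \<in> X"
  shows "(\<Sum>x\<in>X. transport x y) = 1"
proof -
  have "transport x y = (if x = y then 1 - excess y / c y else 0) +
      (if x = par y \<and> 0 < dep y then excess y / c y else 0)" if "x \<in> X" for x
    using assms dep_child[of y y] unfolding transport_def children_def by auto
  then have "(\<Sum>x\<in>X. transport x y) = 1 - excess y / c y + (if 0 < dep y then excess y / c y else 0)"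
    using assms par_in_nodes[OF assms] finite_nodes by (simp add: sum.distrib)
  also have "\<dots> = 1"
    using excess_root[OF assms] by simp
  finally show ?thesis .
qed

lemma sum_transport_row:
  assumes "x \<in> X"
  shows "(\<Sum>y\<in>X. transport x y * c y) = copies x / N"
proof -
  have "transport x y * c y = (if y = x then c x - excess x else 0) +
      (if y \<in> children x then excess y else 0)" if "y \<in> X" for y
    using weight_pos[OF that] dep_child[of x x]
    unfolding transport_def by (auto simp: field_simps)
  then have "(\<Sum>y\<in>X. transport x y * c y) = c x - excess x + (\<Sum>y\<in>children x. excess y)"
    using assms finite_nodes children_subset by (simp add: sum.distrib sum.If_cases Int_absorb1)
  also have "\<dots> = (grid x - (\<Sum>z\<in>children x. grid z)) / N"
    using mass_unfold[OF assms]
    by (simp add: excess_def sum_subtractf sum_divide_distrib diff_divide_distrib)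
  finally show ?thesis
    using of_nat_copies[OF assms] by simp
qed

end

section \<open>Cells of a compact group\<close>

locale haar_cell_cover =
  fixes \<nu> :: "'a::{topological_group_add, t2_space} measure" and W X :: "'a set"
  assumes compact_UNIV: "compact (UNIV :: 'a set)"
    and not_discrete: "\<not> discrete_top TYPE('a)"
    and haar: "normalized_haar \<nu>"
    and open_W: "open W" and zero_in_W: "0 \<in> W" and uminus_in_W: "\<And>w. w \<in> W \<Longrightarrow> -w \<in> W"
    and finite_X: "finite X" and cells_cover: "(\<Union>x\<in>X. (+) x ` W) = UNIV"
begin

sublocale prob_space \<nu>
  using haar unfolding normalized_haar_def by (elim conjE)

lemma sets_haar: "sets \<nu> = sets borel"
  using haar unfolding normalized_haar_def by (elim conjE)

lemma space_haar: "space \<nu> = UNIV"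
  using sets_eq_imp_space_eq[OF sets_haar] by simp

lemma open_in_events: "open A \<Longrightarrow> A \<in> events"
  by (simp add: sets_haar)

lemma measure_image_add_left:
  assumes "open A"
  shows "measure \<nu> ((+) g ` A) = measure \<nu> A"
proof -
  have "\<forall>g. \<forall>A \<in> sets borel. emeasure \<nu> ((+) g ` A) = emeasure \<nu> A"
    using haar unfolding normalized_haar_def by (elim conjE)
  with assms show ?thesis
    unfolding measure_def by simp
qed

definition cell :: "'a \<Rightarrow> 'a set" where
  "cell x = (+) x ` W"

definition coset :: "'a \<Rightarrow> 'a set" where
  "coset x = (+) x ` add_closure W"

lemma open_cell: "open (cell x)"
  unfolding cell_def by (rule open_image_add_left[OF open_W])

lemma mem_cell_self: "x \<in> cell x"
  unfolding cell_def using zero_in_W by (auto intro: image_eqI[where x = 0])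

lemma infinite_cell: "infinite (cell x)"
  using infinite_open_if_not_discrete[OF not_discrete open_cell mem_cell_self] .

lemma measure_cell: "measure \<nu> (cell x) = measure \<nu> W"
  unfolding cell_def by (rule measure_image_add_left[OF open_W])

lemma cell_subset_coset: "cell x \<subseteq> coset x"
  unfolding cell_def coset_def using subset_add_closure by blast

lemma open_coset: "open (coset x)"
  unfolding coset_def by (intro open_image_add_left open_add_closure open_W zero_in_W)

lemma measure_coset: "measure \<nu> (coset x) = measure \<nu> (add_closure W)"
  unfolding coset_def by (intro measure_image_add_left open_add_closure open_W zero_in_W)

lemma coset_eq_iff: "coset x = coset y \<longleftrightarrow> -x + y \<in> add_closure W"
  unfolding coset_def by (rule coset_add_closure_eq_iff[OF uminus_in_W])

lemma mem_coset_iff: "y \<in> coset x \<longleftrightarrow> coset x = coset y"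
  unfolding coset_eq_iff unfolding coset_def by (rule mem_coset_add_closure)

lemma mem_coset_self: "x \<in> coset x"
  using mem_coset_iff by blast

lemma coset_disjoint: "coset x \<noteq> coset y \<Longrightarrow> coset x \<inter> coset y = {}"
  using mem_coset_iff by blast

text \<open>The cosets of the open subgroup \<open>add_closure W\<close> form a disjoint open cover of the
  compact group, so there are finitely many of them, and they all have the same measure.\<close>

lemma measure_add_closure_inverse:
  obtains n :: nat where "0 < n" "real n * measure \<nu> (add_closure W) = 1"
proof -
  have "UNIV \<subseteq> (\<Union>x. coset x)"
    using mem_coset_self by blast
  then obtain Y where "Y \<subseteq> UNIV" "finite Y" and Y: "UNIV \<subseteq> (\<Union>y\<in>Y. coset y)"
    by (rule compactE_image[OF compact_UNIV open_coset])
  have "x \<in> (\<Union>C\<in>coset ` Y. C)" for x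
  proof -
    obtain y where "y \<in> Y" "x \<in> coset y"
      using Y by blast
    then have "coset x = coset y"
      by (simp add: mem_coset_iff)
    with \<open>y \<in> Y\<close> mem_coset_self show ?thesis
      by (intro UN_I[of "coset y"]) auto
  qed
  then have "(\<Union>C\<in>coset ` Y. C) = UNIV"
    by blast
  then have "1 = measure \<nu> (\<Union>C\<in>coset ` Y. C)"
    using prob_space space_haar by simp
  also have "\<dots> = (\<Sum>C\<in>coset ` Y. measure \<nu> C)"
  proof (rule measure_finite_Union)
    show "disjoint_family_on (\<lambda>C. C) (coset ` Y)"
      unfolding disjoint_family_on_def using coset_disjoint by blast
  qed (use \<open>finite Y\<close> open_coset open_in_events in auto)
  also have "\<dots> = (\<Sum>C\<in>coset ` Y. measure \<nu> (add_closure W))"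
    using measure_coset by (intro sum.cong) auto
  also have "\<dots> = real (card (coset ` Y)) * measure \<nu> (add_closure W)"
    by simp
  finally show thesis
    by (intro that[of "card (coset ` Y)"]) (auto intro: gr0I)
qed

lemma mem_cells: "g \<in> (\<Union>x\<in>X. cell x)"
  using cells_cover unfolding cell_def by blast

definition weight :: "'a \<Rightarrow> real" where
  "weight y = integral\<^sup>L \<nu> (indicator_partition cell X y)"

lemma integrable_indicator_partition_cell: "y \<in> X \<Longrightarrow> integrable \<nu> (indicator_partition cell X y)"
  by (intro integrable_indicator_partition finite_measure_axioms finite_X open_in_events open_cell)

lemma card_X_pos: "0 < card X"
  using mem_cells finite_X by (auto simp: card_gt_0_iff)

lemma measure_W_ge: "1 / card X \<le> measure \<nu> W"
proof -
  have "(\<Union>x\<in>X. cell x) = UNIV"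
    using mem_cells by blast
  then have "1 = measure \<nu> (\<Union>x\<in>X. cell x)"
    using prob_space space_haar by simp
  also have "\<dots> \<le> (\<Sum>x\<in>X. measure \<nu> (cell x))"
    by (intro measure_UNION_le finite_X open_in_events open_cell)
  also have "\<dots> = card X * measure \<nu> W"
    by (simp add: measure_cell)
  finally show ?thesis
    using card_X_pos by (simp add: field_simps)
qed

lemma weight_ge_inverse_card_sq: "y \<in> X \<Longrightarrow> 1 / card X ^ 2 \<le> weight y"
proof -
  assume "y \<in> X"
  have "1 / card X ^ 2 \<le> measure \<nu> W / card X"
    using measure_W_ge card_X_pos by (simp add: field_simps power2_eq_square)
  also have "\<dots> \<le> weight y"
    unfolding weight_def using integral_indicator_partition_ge[OF finite_measure_axioms finite_X
        \<open>y \<in> X\<close>, of cell] open_cell open_in_events measure_cell by simp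
  finally show ?thesis .
qed

definition near :: "('a \<times> 'a) set" where
  "near = {(a, b). a \<in> X \<and> b \<in> X \<and> (\<exists>p\<in>W. \<exists>q\<in>W. \<exists>t\<in>W. b = a + (p + (q + t)))}"

lemma near_coset:
  assumes "(a, b) \<in> near"
  shows "coset a = coset b"
proof -
  obtain p q t where "p \<in> W" "q \<in> W" "t \<in> W" and b: "b = a + (p + (q + t))"
    using assms unfolding near_def by blast
  then have "p + (q + t) \<in> add_closure W"
    using subset_add_closure by (blast intro: add_closure_add)
  moreover have "-a + b = p + (q + t)"
    unfolding b by (simp add: add.assoc[symmetric])
  ultimately show ?thesis
    unfolding coset_eq_iff by simp
qed

definition rep :: "'a \<Rightarrow> 'a" where
  "rep x = (SOME r. r \<in> X \<and> coset r = coset x)"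

lemma rep_in_X_coset: "x \<in> X \<Longrightarrow> rep x \<in> X \<and> coset (rep x) = coset x"
  unfolding rep_def by (rule someI) blast

lemma rep_eq_iff:
  assumes "x \<in> X" "y \<in> X"
  shows "rep x = rep y \<longleftrightarrow> coset x = coset y"
proof
  assume "rep x = rep y"
  then show "coset x = coset y"
    using rep_in_X_coset[OF assms(1)] rep_in_X_coset[OF assms(2)] by simp
qed (simp add: rep_def)

text \<open>The cells reachable from \<open>rep x\<close> cover a set that is invariant under adding elements
  of \<open>W\<close> on the right, so they cover the whole coset of \<open>rep x\<close>, which contains \<open>x\<close>.\<close>

lemma rep_near_rtrancl:
  assumes "x \<in> X"
  shows "(rep x, x) \<in> near\<^sup>*"
proof -
  define r where "r = rep x"
  define reach where "reach = (\<Union>y\<in>{y \<in> X. (r, y) \<in> near\<^sup>*}. cell y)"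
  have reach_add: "a + w \<in> reach" if a: "a \<in> reach" and w: "w \<in> W" for a w
  proof -
    obtain y b where y: "y \<in> X" "(r, y) \<in> near\<^sup>*" and "b \<in> W" "a = y + b"
      using a unfolding reach_def cell_def by blast
    obtain y' b' where "y' \<in> X" "b' \<in> W" and aw: "a + w = y' + b'"
      using mem_cells[of "a + w"] unfolding cell_def by blast
    have "y' = y + (b + (w + -b'))"
      using aw \<open>a = y + b\<close> by (simp add: add.assoc algebra_simps eq_neg_iff_add_eq_0)
    then have "(y, y') \<in> near"
      unfolding near_def using y(1) \<open>y' \<in> X\<close> \<open>b \<in> W\<close> w uminus_in_W[OF \<open>b' \<in> W\<close>] by blast
    then show ?thesis
      using y \<open>y' \<in> X\<close> \<open>b' \<in> W\<close> aw unfolding reach_def cell_def by fastforce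
  qed
  have "r \<in> X" "coset r = coset x"
    using rep_in_X_coset[OF assms] unfolding r_def by auto
  then have "r \<in> reach"
    unfolding reach_def using mem_cell_self by blast
  moreover have "-r + x \<in> add_closure W"
    using \<open>coset r = coset x\<close> coset_eq_iff by blast
  ultimately have "r + (-r + x) \<in> reach"
    using add_closure_minimal reach_add by blast
  then obtain y b where y: "y \<in> X" "(r, y) \<in> near\<^sup>*" and "b \<in> W" "x = y + b"
    unfolding reach_def cell_def by (auto simp: add.assoc[symmetric])
  then have "(y, x) \<in> near"
    unfolding near_def using assms zero_in_W by force
  with y(2) show ?thesis
    unfolding r_def by simp
qed

lemma sum_weight_coset:
  assumes "r \<in> X"
  shows "(\<Sum>y\<in>{y \<in> X. coset y = coset r}. weight y) = measure \<nu> (add_closure W)"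
proof -
  have "(\<Sum>y\<in>{y \<in> X. coset y = coset r}. indicator_partition cell X y g) = indicator (coset r) g"
    for g
  proof (rule sum_indicator_partition_eq_indicator[OF finite_X mem_cells])
    show "cell y \<inter> coset r = {}" if "y \<in> X - {y \<in> X. coset y = coset r}" for y
      using that cell_subset_coset coset_disjoint by blast
  qed (use cell_subset_coset in auto)
  then have "(\<Sum>y\<in>{y \<in> X. coset y = coset r}. weight y) = integral\<^sup>L \<nu> (indicator (coset r))"
    unfolding weight_def using integrable_indicator_partition_cell
    by (subst Bochner_Integration.integral_sum[symmetric]) auto
  also have "\<dots> = measure \<nu> (add_closure W)"
    using open_coset open_in_events measure_coset space_haar by simp
  finally show ?thesis .
qed

lemma mem_cell_near:
  assumes "y = x \<or> (x, y) \<in> near" "g \<in> cell y"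
  shows "\<exists>p\<in>W. \<exists>q\<in>W. \<exists>t\<in>W. \<exists>v\<in>W. g = x + (p + (q + (t + v)))"
proof -
  obtain p q t where "p \<in> W" "q \<in> W" "t \<in> W" and y: "y = x + (p + (q + t))"
    using assms(1)
  proof (elim disjE)
    assume "y = x"
    then show thesis
      using that[of 0 0 0] zero_in_W by simp
  qed (use that in \<open>auto simp: near_def\<close>)
  moreover obtain v where "v \<in> W" and g: "g = y + v"
    using assms(2) unfolding cell_def by blast
  moreover have "g = x + (p + (q + (t + v)))"
    unfolding g y by (simp add: add.assoc)
  ultimately show ?thesis
    by blast
qed

lemma forest_rounding_near:
  obtains par dep N where "forest_rounding X par dep weight N"
    "\<And>x. x \<in> X \<Longrightarrow> 0 < dep x \<Longrightarrow> (par x, x) \<in> near"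
proof -
  obtain n :: nat where "0 < n" and n: "real n * measure \<nu> (add_closure W) = 1"
    using measure_add_closure_inverse by blast
  have "near \<subseteq> X \<times> X"
    unfolding near_def by blast
  moreover have "rep a = rep b" if "(a, b) \<in> near" for a b
    using that near_coset rep_eq_iff unfolding near_def by blast
  ultimately obtain par dep where forest: "rooted_forest X par dep"
    and par: "\<And>x. x \<in> X \<Longrightarrow> 0 < dep x \<Longrightarrow> (par x, x) \<in> near"
    and root: "\<And>x. x \<in> X \<Longrightarrow> (par ^^ dep x) x = rep x"
    using exists_rooted_forest[OF finite_X _ _ rep_near_rtrancl] by metis
  interpret rooted_forest X par dep
    by (rule forest)
  define N where "N = n * card X ^ 2"
  have "forest_rounding X par dep weight N"
  proof unfold_locales
    show "0 < N"
      unfolding N_def using \<open>0 < n\<close> card_X_pos by simp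
    have "1 / real N \<le> 1 / card X ^ 2"
      unfolding N_def using \<open>0 < n\<close> card_X_pos by (intro frac_le) auto
    then show "1 / real N \<le> weight x" if "x \<in> X" for x
      using weight_ge_inverse_card_sq[OF that] by linarith
  next
    fix r assume r: "r \<in> X" "dep r = 0"
    have "rep y = r \<longleftrightarrow> coset y = coset r" if "y \<in> X" for y
      using rep_eq_iff[OF that r(1)] root[OF r(1)] r(2) by simp
    then have "subtree r = {y \<in> X. coset y = coset r}"
      unfolding subtree_of_root[OF r(2)] using root by (intro Collect_cong conj_cong) simp_all
    then have "(\<Sum>y\<in>subtree r. weight y) * real N = real (card X ^ 2)"
      using sum_weight_coset[OF r(1)] n unfolding N_def by (simp add: algebra_simps)
    then show "(\<Sum>y\<in>subtree r. weight y) * real N \<in> \<int>"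
      by simp
  qed
  then show thesis
    using par by (rule that)
qed

text \<open>Mass is only moved from a node to its parent, i.e. between \<open>near\<close> cells, so \<open>\<psi> x\<close>
  stays supported close to the cell of \<open>x\<close>.\<close>

lemma exists_rounded_partition:
  obtains \<psi> :: "'a \<Rightarrow> 'a \<Rightarrow> real" and k :: "'a \<Rightarrow> nat" and N :: nat where
    "\<And>x. x \<in> X \<Longrightarrow> 0 < k x"
    "\<And>x. x \<in> X \<Longrightarrow> integrable \<nu> (\<psi> x)"
    "\<And>x. x \<in> X \<Longrightarrow> integral\<^sup>L \<nu> (\<psi> x) = k x / N"
    "\<And>x g. x \<in> X \<Longrightarrow> 0 \<le> \<psi> x g"
    "\<And>x g. x \<in> X \<Longrightarrow> \<psi> x g \<noteq> 0 \<Longrightarrow>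
      \<exists>p\<in>W. \<exists>q\<in>W. \<exists>t\<in>W. \<exists>v\<in>W. g = x + (p + (q + (t + v)))"
    "\<And>g. (\<Sum>x\<in>X. \<psi> x g) = 1"
proof -
  obtain par dep N where rounding: "forest_rounding X par dep weight N"
    and par: "\<And>x. x \<in> X \<Longrightarrow> 0 < dep x \<Longrightarrow> (par x, x) \<in> near"
    using forest_rounding_near by blast
  interpret forest_rounding X par dep weight N
    by (rule rounding)
  define \<phi> where "\<phi> = indicator_partition cell X"
  define \<psi> where "\<psi> x g = (\<Sum>y\<in>X. transport x y * \<phi> y g)" for x g
  have int_\<phi>: "integrable \<nu> (\<phi> y)" if "y \<in> X" for y
    unfolding \<phi>_def using that by (rule integrable_indicator_partition_cell)
  show thesis
  proof (rule that[of copies \<psi> N])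
    show "integrable \<nu> (\<psi> x)" for x
      unfolding \<psi>_def using int_\<phi> by auto
    show "integral\<^sup>L \<nu> (\<psi> x) = copies x / N" if "x \<in> X" for x
      using sum_transport_row[OF that] int_\<phi>
      unfolding \<psi>_def weight_def \<phi>_def by (simp add: Bochner_Integration.integral_sum)
    show "0 \<le> \<psi> x g" if "x \<in> X" for x g
      unfolding \<psi>_def \<phi>_def using that transport_nonneg indicator_partition_nonneg
      by (intro sum_nonneg mult_nonneg_nonneg) auto
    show "(\<Sum>x\<in>X. \<psi> x g) = 1" for g
    proof -
      have "(\<Sum>x\<in>X. \<psi> x g) = (\<Sum>y\<in>X. (\<Sum>x\<in>X. transport x y) * \<phi> y g)"
        unfolding \<psi>_def by (subst sum.swap) (simp add: sum_distrib_right)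
      also have "\<dots> = 1"
        using sum_transport_column sum_indicator_partition[OF finite_X mem_cells]
        unfolding \<phi>_def by simp
      finally show ?thesis .
    qed
    fix x g assume "\<psi> x g \<noteq> 0"
    then obtain y where "y \<in> X" and "transport x y * \<phi> y g \<noteq> 0"
      unfolding \<psi>_def by (rule sum.not_neutral_contains_not_neutral)
    then have "transport x y \<noteq> 0" "\<phi> y g \<noteq> 0"
      by simp_all
    then have "y = x \<or> (x, y) \<in> near" "g \<in> cell y"
      using transport_neq_0[of x y] par[OF \<open>y \<in> X\<close>] indicator_partition_eq_0[of g cell y X]
      unfolding \<phi>_def by auto
    then show "\<exists>p\<in>W. \<exists>q\<in>W. \<exists>t\<in>W. \<exists>v\<in>W. g = x + (p + (q + (t + v)))"
      by (rule mem_cell_near)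
  qed (use copies_pos in auto)
qed

lemma mem_image_add_left_if_near_cell:
  assumes "\<And>a b c d e. a \<in> W \<Longrightarrow> b \<in> W \<Longrightarrow> c \<in> W \<Longrightarrow> d \<in> W \<Longrightarrow> e \<in> W \<Longrightarrow>
      a + (b + (c + (d + e))) \<in> U"
    and "h \<in> cell x" "\<exists>p\<in>W. \<exists>q\<in>W. \<exists>t\<in>W. \<exists>v\<in>W. g = x + (p + (q + (t + v)))"
  shows "g \<in> (+) h ` U"
proof -
  obtain d p q t v where "d \<in> W" "p \<in> W" "q \<in> W" "t \<in> W" "v \<in> W"
    and h: "h = x + d" and g: "g = x + (p + (q + (t + v)))"
    using assms(2,3) unfolding cell_def by blast
  then have "-d + (p + (q + (t + v))) \<in> U"
    by (intro assms(1) uminus_in_W)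
  moreover have "g = h + (-d + (p + (q + (t + v))))"
    unfolding g h by (simp add: add.assoc)
  ultimately show ?thesis
    by (simp add: image_iff)
qed

text \<open>Each \<open>\<psi> x\<close> is split evenly among \<open>k x\<close> distinct points chosen in the (infinite)
  cell of \<open>x\<close>; the resulting functions all have integral \<open>1 / N\<close>.\<close>

lemma exists_equal_partition_of_unity:
  assumes "\<And>a b c d e. a \<in> W \<Longrightarrow> b \<in> W \<Longrightarrow> c \<in> W \<Longrightarrow> d \<in> W \<Longrightarrow> e \<in> W \<Longrightarrow>
      a + (b + (c + (d + e))) \<in> U"
  obtains H w a where "partition_of_unity_subordinate \<nu> H w (\<lambda>h. (+) h ` U)"
    "\<And>h. h \<in> H \<Longrightarrow> integral\<^sup>L \<nu> (w h) = a"
proof -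
  obtain \<psi> :: "'a \<Rightarrow> 'a \<Rightarrow> real" and k :: "'a \<Rightarrow> nat" and N :: nat
    where k_pos: "\<And>x. x \<in> X \<Longrightarrow> 0 < k x"
    and int: "\<And>x. x \<in> X \<Longrightarrow> integrable \<nu> (\<psi> x)"
    and integral: "\<And>x. x \<in> X \<Longrightarrow> integral\<^sup>L \<nu> (\<psi> x) = k x / N"
    and nonneg: "\<And>x g. x \<in> X \<Longrightarrow> 0 \<le> \<psi> x g"
    and supp: "\<And>x g. x \<in> X \<Longrightarrow> \<psi> x g \<noteq> 0 \<Longrightarrow>
      \<exists>p\<in>W. \<exists>q\<in>W. \<exists>t\<in>W. \<exists>v\<in>W. g = x + (p + (q + (t + v)))"
    and sum1: "\<And>g. (\<Sum>x\<in>X. \<psi> x g) = 1"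
    by (rule exists_rounded_partition) (rule that)
  obtain H own where "finite H" and own: "\<forall>h\<in>H. own h \<in> X \<and> h \<in> cell (own h)"
    and card_own: "\<forall>x\<in>X. card {h \<in> H. own h = x} = k x"
    using exists_finite_copies[where A = cell and k = k, OF finite_X infinite_cell]
    by (elim exE conjE)
  define w where "w h g = \<psi> (own h) g / k (own h)" for h g
  have "g \<in> (+) h ` U" if "h \<in> H" "w h g \<noteq> 0" for h g
    using own that supp[of "own h" g] unfolding w_def
    by (intro mem_image_add_left_if_near_cell[OF assms]) auto
  moreover have "(\<Sum>h\<in>H. w h g) = 1" for g
  proof -
    have "(\<Sum>h\<in>H. w h g) = (\<Sum>x\<in>X. \<Sum>h\<in>{h \<in> H. own h = x}. w h g)"
      using \<open>finite H\<close> finite_X own by (intro sum.group[symmetric]) auto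
    also have "\<dots> = (\<Sum>x\<in>X. \<Sum>h\<in>{h \<in> H. own h = x}. \<psi> x g / k x)"
      unfolding w_def by (intro sum.cong refl) auto
    also have "\<dots> = (\<Sum>x\<in>X. \<psi> x g)"
      using card_own k_pos by (intro sum.cong) auto
    finally show ?thesis
      using sum1 by simp
  qed
  ultimately have "partition_of_unity_subordinate \<nu> H w (\<lambda>h. (+) h ` U)"
    unfolding partition_of_unity_subordinate_def w_def using \<open>finite H\<close> own int nonneg by auto
  moreover have "integral\<^sup>L \<nu> (w h) = 1 / N" if "h \<in> H" for h
    using integral own k_pos that unfolding w_def by simp
  ultimately show thesis
    by (rule that)
qed

end

theorem lemma3:
  fixes \<nu> :: "'a::{topological_group_add, t2_space} measure"
    and U :: "'a set"
  assumes "compact (UNIV :: 'a set)"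
    and "\<not> discrete_top TYPE('a)"
    and "normalized_haar \<nu>"
    and "open U" and "0 \<in> U"
  shows "\<exists>H. finite H \<and>
           (\<Union>h\<in>H. (\<lambda>u. h + u) ` U) = UNIV \<and>
           (\<forall>I \<subseteq> H. measure \<nu> (\<Union>h\<in>I. (\<lambda>u. h + u) ` U) \<ge> real (card I) / real (card H))"
proof -
  obtain W where W: "open W" "0 \<in> W" "\<And>w. w \<in> W \<Longrightarrow> -w \<in> W"
    and W_U: "\<And>a b c d e. a \<in> W \<Longrightarrow> b \<in> W \<Longrightarrow> c \<in> W \<Longrightarrow> d \<in> W \<Longrightarrow> e \<in> W \<Longrightarrow>
      a + (b + (c + (d + e))) \<in> U"
    using symmetric_nhds_zero_sum5[OF assms(4,5)] by blast
  obtain X where "finite X" "(\<Union>x\<in>X. (+) x ` W) = UNIV"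
    using finite_translates_cover[OF assms(1) W(1,2)] by blast
  then interpret haar_cell_cover \<nu> W X
    using assms(1-3) W by unfold_locales
  obtain H w a where partition: "partition_of_unity_subordinate \<nu> H w (\<lambda>h. (+) h ` U)"
    and "\<And>h. h \<in> H \<Longrightarrow> integral\<^sup>L \<nu> (w h) = a"
    using exists_equal_partition_of_unity[OF W_U] by blast
  moreover have "(+) h ` U \<in> events" for h
    by (intro open_in_events open_image_add_left assms(4))
  ultimately have "card I / card H \<le> measure \<nu> (\<Union>h\<in>I. (+) h ` U)" if "I \<subseteq> H" for I
    using partition_of_unity_subordinate_measure_ge[OF prob_space_axioms partition] that by blast
  moreover have "(\<Union>h\<in>H. (+) h ` U) = UNIV"
    using partition_of_unity_subordinate_cover[OF partition] space_haar by blast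
  ultimately show ?thesis
    using partition unfolding partition_of_unity_subordinate_def by blast
qed

end
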